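(* Let $k$ be a positive integer and $n \ge 2$. (a) If $n\le k+2$, then $\dim_{k,f}(P_n)=1$. (b) If $k+3\le n\le 2k+3$, then $\dim_{k,f}(P_n)=\frac{6+2k-n}{5+2k-n}$. (c) Let $n\ge 2k+4$. (i) If $n \equiv 1 \pmod{2k+2}$, then $\dim_{k,f}(P_n)=\frac{n+k}{2k+2}$. (ii) If $n \equiv j \pmod{2k+2}$ for some $j\in\{2, 3, \ldots, k+2\}$, then $\dim_{k,f}(P_n)=\lceil\frac{n}{2k+2}\rceil$. (iii) If $n\equiv 0 \pmod{2k+2}$ or $n\equiv j \pmod{2k+2}$ for some $j\in\{k+3, k+4, \ldots, 2k+1\}$, then $\lceil\frac{n}{2k+2}\rceil \le \dim_{k,f}(P_n) \le \lceil\frac{n}{2k+2}\rceil +\frac{1}{2}$.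
   Context: $P_n$ is the path on $n$ vertices. $d(x,y)$ is the distance in $G$. For a positive integer $k$, $d_k(x,y)=\min\{d(x,y),k+1\}$ and $R_k\{x,y\}=\{z\in V(G): d_k(x,z)\neq d_k(y,z)\}$. For a function $g$ on $V(G)$ and $U\subseteq V(G)$, $g(U)=\sum_{s\in U}g(s)$. A function $h:V(G)\to[0,1]$ is a $k$-truncated resolving function of $G$ if $h(R_k\{x,y\})\ge 1$ for all distinct $x,y\in V(G)$; $\dim_{k,f}(G)$ is the minimum of $h(V(G))$ over all such $h$. *)

theory Defs
  imports Complex_Main
begin

definition gdist :: "('a \<times> 'a) set \<Rightarrow> 'a \<Rightarrow> 'a \<Rightarrow> nat" where
  "gdist E x y = (LEAST m. (x, y) \<in> E ^^ m)"

definition tdist :: "nat \<Rightarrow> ('a \<times> 'a) set \<Rightarrow> 'a \<Rightarrow> 'a \<Rightarrow> nat" where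
  "tdist k E x y = min (gdist E x y) (k + 1)"

definition resolv_set :: "nat \<Rightarrow> 'a set \<Rightarrow> ('a \<times> 'a) set \<Rightarrow> 'a \<Rightarrow> 'a \<Rightarrow> 'a set" where
  "resolv_set k V E x y = {z \<in> V. tdist k E x z \<noteq> tdist k E y z}"

definition is_k_trunc_resolving_fn ::
  "nat \<Rightarrow> 'a set \<Rightarrow> ('a \<times> 'a) set \<Rightarrow> ('a \<Rightarrow> real) \<Rightarrow> bool" where
  "is_k_trunc_resolving_fn k V E h \<longleftrightarrow>
     (\<forall>v\<in>V. 0 \<le> h v \<and> h v \<le> 1) \<and>
     (\<forall>x\<in>V. \<forall>y\<in>V. x \<noteq> y \<longrightarrow> sum h (resolv_set k V E x y) \<ge> 1)"

definition frac_trunc_dim :: "nat \<Rightarrow> 'a set \<Rightarrow> ('a \<times> 'a) set \<Rightarrow> real" where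
  "frac_trunc_dim k V E = Inf {sum h V | h. is_k_trunc_resolving_fn k V E h}"

definition path_V :: "nat \<Rightarrow> nat set" where
  "path_V n = {0..<n}"

definition path_E :: "nat \<Rightarrow> (nat \<times> nat) set" where
  "path_E n = {(i, j). i < n \<and> j < n \<and> (i = j + 1 \<or> j = i + 1)}"

abbreviation dimP :: "nat \<Rightarrow> nat \<Rightarrow> real" where
  "dimP k n \<equiv> frac_trunc_dim k (path_V n) (path_E n)"

end

theory Submission
  imports Defs
begin

text \<open>
  Lower bounds: an edge \<open>{x, x+1}\<close> of the path is resolved only by vertices within distance
  \<open>k\<close> of it, i.e. inside a window of \<open>2k+2\<close> consecutive vertices (\<open>k+2\<close> at an end of the
  path), and the pair \<open>{c-1, c+1}\<close> only by vertices other than \<open>c\<close> within distance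
  \<open>k+1\<close> of \<open>c\<close>. A resolving function therefore has weight at least 1 on each such window;
  covering the path by disjoint windows, and for short paths averaging over the central
  vertices \<open>c\<close>, gives the lower bounds.

  Upper bounds: if a landmark set \<open>P\<close> contains both ends of the path and meets every
  \<open>k+1\<close> consecutive vertices, then each pair \<open>x < y\<close> is resolved by a landmark in
  \<open>[x-k, x]\<close> and by another one in \<open>[y, y+k]\<close>, so weight 1/2 on \<open>P\<close> is resolving.
  For \<open>k+3 \<le> n \<le> 2k+3\<close> the two ends together with the central vertices
  \<open>n-k-2, ..., k+1\<close> miss at most one vertex of each resolving set, so weight
  \<open>1/(|P|-1)\<close> on them is resolving.
\<close>

abbreviation nat_dist :: "nat \<Rightarrow> nat \<Rightarrow> nat" where
  "nat_dist x y \<equiv> (x - y) + (y - x)"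

lemma resolv_set_subset: "resolv_set k V E x y \<subseteq> V"
  by (auto simp: resolv_set_def)

lemma resolv_set_commute: "resolv_set k V E x y = resolv_set k V E y x"
  by (auto simp: resolv_set_def)

lemma frac_trunc_dim_le:
  assumes "is_k_trunc_resolving_fn k V E h"
  shows "frac_trunc_dim k V E \<le> sum h V"
  unfolding frac_trunc_dim_def
proof (rule cInf_lower)
  show "sum h V \<in> {sum h V |h. is_k_trunc_resolving_fn k V E h}"
    using assms by blast
  have "0 \<le> sum g V" if "is_k_trunc_resolving_fn k V E g" for g
    using that by (simp add: is_k_trunc_resolving_fn_def sum_nonneg)
  then show "bdd_below {sum h V |h. is_k_trunc_resolving_fn k V E h}"
    unfolding bdd_below_def by blast
qed

lemma frac_trunc_dim_ge:
  assumes "is_k_trunc_resolving_fn k V E g"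
    and "\<And>h. is_k_trunc_resolving_fn k V E h \<Longrightarrow> c \<le> sum h V"
  shows "c \<le> frac_trunc_dim k V E"
  unfolding frac_trunc_dim_def using assms by (intro cInf_greatest) blast+

lemma resolving_fn_one_le_sum_superset:
  assumes h: "is_k_trunc_resolving_fn k V E h" and "finite V"
    and "x \<in> V" "y \<in> V" "x \<noteq> y" "resolv_set k V E x y \<subseteq> A" "A \<subseteq> V"
  shows "1 \<le> sum h A"
proof -
  have "1 \<le> sum h (resolv_set k V E x y)"
    using h assms(3-5) by (simp add: is_k_trunc_resolving_fn_def)
  also have "\<dots> \<le> sum h A"
    using h assms(2,6,7)
    by (intro sum_mono2) (auto simp: is_k_trunc_resolving_fn_def intro: finite_subset)
  finally show ?thesis .
qed

lemma frac_trunc_dim_le_uniform: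
  fixes w :: real
  assumes "finite V" "P \<subseteq> V" "0 \<le> w" "w \<le> 1"
    and resolved: "\<And>x y. x \<in> V \<Longrightarrow> y \<in> V \<Longrightarrow> x \<noteq> y \<Longrightarrow>
      1 \<le> w * card (resolv_set k V E x y \<inter> P)"
  shows "frac_trunc_dim k V E \<le> w * card P"
proof -
  define h where "h z = (if z \<in> P then w else 0)" for z
  have sum_h: "sum h A = w * card (A \<inter> P)" if "finite A" for A
    using sum.inter_restrict[OF that, of "\<lambda>_. w" P] by (simp add: h_def mult.commute)
  have "1 \<le> sum h (resolv_set k V E x y)" if "x \<in> V" "y \<in> V" "x \<noteq> y" for x y
    using resolved[OF that] sum_h[OF finite_subset[OF resolv_set_subset \<open>finite V\<close>]] by simp
  with assms(3,4) have "is_k_trunc_resolving_fn k V E h"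
    by (auto simp: is_k_trunc_resolving_fn_def h_def)
  then have "frac_trunc_dim k V E \<le> sum h V" by (rule frac_trunc_dim_le)
  also have "\<dots> = w * card P"
    using sum_h[OF \<open>finite V\<close>] \<open>P \<subseteq> V\<close> by (simp add: Int_absorb1)
  finally show ?thesis .
qed

lemma relpow_path_E_imp_nat_dist_le:
  "(x, y) \<in> path_E n ^^ m \<Longrightarrow> nat_dist x y \<le> m"
proof (induction m arbitrary: y)
  case 0
  then show ?case by simp
next
  case (Suc m)
  then obtain z where "(x, z) \<in> path_E n ^^ m" "(z, y) \<in> path_E n" by auto
  with Suc.IH show ?case unfolding path_E_def by fastforce
qed

lemma relpow_path_E_segment:
  "x + d < n \<Longrightarrow> (x, x + d) \<in> path_E n ^^ d \<and> (x + d, x) \<in> path_E n ^^ d"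
proof (induction d)
  case 0
  then show ?case by simp
next
  case (Suc d)
  then have IH: "(x, x + d) \<in> path_E n ^^ d" "(x + d, x) \<in> path_E n ^^ d"
    by simp_all
  have "(x + d, x + Suc d) \<in> path_E n" "(x + Suc d, x + d) \<in> path_E n"
    using Suc.prems by (auto simp: path_E_def)
  then show ?case
    using relpow_Suc_I[OF IH(1)] relpow_Suc_I2[OF _ IH(2)] by simp
qed

lemma gdist_path_E:
  assumes "x < n" "y < n"
  shows "gdist (path_E n) x y = nat_dist x y"
  unfolding gdist_def
proof (rule Least_equality)
  show "(x, y) \<in> path_E n ^^ nat_dist x y"
    using assms relpow_path_E_segment[of x "y - x" n] relpow_path_E_segment[of y "x - y" n]
    by (cases "x \<le> y") auto
qed (rule relpow_path_E_imp_nat_dist_le)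

abbreviation path_resolv_set :: "nat \<Rightarrow> nat \<Rightarrow> nat \<Rightarrow> nat \<Rightarrow> nat set" where
  "path_resolv_set k n \<equiv> resolv_set k (path_V n) (path_E n)"

abbreviation path_resolving :: "nat \<Rightarrow> nat \<Rightarrow> (nat \<Rightarrow> real) \<Rightarrow> bool" where
  "path_resolving k n \<equiv> is_k_trunc_resolving_fn k (path_V n) (path_E n)"

lemma mem_path_resolv_set:
  assumes "x < n" "y < n"
  shows "z \<in> path_resolv_set k n x y \<longleftrightarrow>
    z < n \<and> min (nat_dist x z) (k + 1) \<noteq> min (nat_dist y z) (k + 1)"
  using assms by (auto simp: resolv_set_def tdist_def path_V_def gdist_path_E)

lemma path_resolving_one: "path_resolving k n (\<lambda>_. 1)"
proof -
  have "1 \<le> card (path_resolv_set k n x y)" if "x < n" "y < n" "x \<noteq> y" for x y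
  proof -
    have "x \<in> path_resolv_set k n x y"
      using that by (auto simp: mem_path_resolv_set)
    moreover have "finite (path_resolv_set k n x y)"
      using finite_subset[OF resolv_set_subset, of "path_V n"] by (simp add: path_V_def)
    ultimately show ?thesis
      by (metis One_nat_def Suc_leI card_gt_0_iff empty_iff)
  qed
  then show ?thesis
    by (simp add: is_k_trunc_resolving_fn_def path_V_def)
qed

lemma dimP_ge:
  assumes "\<And>h. path_resolving k n h \<Longrightarrow> c \<le> sum h {0..<n}"
  shows "c \<le> dimP k n"
  using frac_trunc_dim_ge[OF path_resolving_one] assms by (simp add: path_V_def)

lemma path_resolving_nonneg: "path_resolving k n h \<Longrightarrow> z < n \<Longrightarrow> 0 \<le> h z"
  by (simp add: is_k_trunc_resolving_fn_def path_V_def)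

lemma path_resolving_one_le_sum_edge_window:
  assumes h: "path_resolving k n h" and "x + 1 < n" "a \<le> x - k" "min (x + k + 2) n \<le> b" "b \<le> n"
  shows "1 \<le> sum h {a..<b}"
proof (rule resolving_fn_one_le_sum_superset[OF h, of x "x + 1"])
  show "path_resolv_set k n x (x + 1) \<subseteq> {a..<b}"
  proof
    fix z assume "z \<in> path_resolv_set k n x (x + 1)"
    then have "z < n" "min (nat_dist x z) (k + 1) \<noteq> min (nat_dist (x + 1) z) (k + 1)"
      using mem_path_resolv_set[of x n "x + 1" z k] assms(2) by simp_all
    then show "z \<in> {a..<b}"
      using assms(3,4) unfolding atLeastLessThan_iff by linarith
  qed
qed (use assms(2,5) in \<open>auto simp: path_V_def\<close>)

lemma path_resolving_one_le_sum_minus_midpoint: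
  assumes h: "path_resolving k n h" and "1 \<le> c" "c + 1 < n"
    and "a \<le> c - (k + 1)" "min (c + k + 2) n \<le> b" "b \<le> n"
  shows "1 \<le> sum h {a..<b} - h c"
proof -
  have "1 \<le> sum h ({a..<b} - {c})"
  proof (rule resolving_fn_one_le_sum_superset[OF h, of "c - 1" "c + 1"])
    show "path_resolv_set k n (c - 1) (c + 1) \<subseteq> {a..<b} - {c}"
    proof
      fix z assume "z \<in> path_resolv_set k n (c - 1) (c + 1)"
      then have "z < n" "min (nat_dist (c - 1) z) (k + 1) \<noteq> min (nat_dist (c + 1) z) (k + 1)"
        using mem_path_resolv_set[of "c - 1" n "c + 1" z k] assms(3) by simp_all
      then have "z \<noteq> c" "c - (k + 1) \<le> z" "z < min (c + k + 2) n"
        using assms(2) by auto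
      then show "z \<in> {a..<b} - {c}"
        using assms(4,5) by auto
    qed
  qed (use assms(2,3,6) in \<open>auto simp: path_V_def\<close>)
  moreover have "c \<in> {a..<b}"
    using assms(2-5) by (simp add: min_def split: if_splits)
  ultimately show ?thesis
    by (simp add: sum_diff1)
qed

lemma path_resolving_blocks_le_sum:
  assumes h: "path_resolving k n h"
  shows "a + m * (2 * k + 2) \<le> n \<Longrightarrow> real m \<le> sum h {a..<a + m * (2 * k + 2)}"
proof (induction m)
  case 0
  then show ?case by simp
next
  case (Suc m)
  define b where "b = a + m * (2 * k + 2)"
  have "real m \<le> sum h {a..<b}"
    using Suc by (simp add: b_def)
  moreover have "1 \<le> sum h {b..<b + (2 * k + 2)}"
    by (rule path_resolving_one_le_sum_edge_window[OF h, of "b + k"]) (use Suc.prems in \<open>simp_all add: b_def\<close>)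
  moreover have "a + Suc m * (2 * k + 2) = b + (2 * k + 2)"
    by (simp add: b_def)
  then have "sum h {a..<a + Suc m * (2 * k + 2)} = sum h {a..<b} + sum h {b..<b + (2 * k + 2)}"
    by (simp only:) (rule sum.atLeastLessThan_concat[symmetric], simp_all add: b_def)
  ultimately show ?case by simp
qed

lemma path_resolving_weight_ge_rem_ge_2:
  assumes h: "path_resolving k n h" and n: "q * (2 * k + 2) + 2 \<le> n"
  shows "real q + 1 \<le> sum h {0..<n}"
proof (cases q)
  case 0
  then show ?thesis
    using n path_resolving_one_le_sum_edge_window[OF h, of 0 0 n] by simp
next
  case (Suc m)
  define L where "L = m * (2 * k + 2)"
  have n': "k + 2 + L + (k + 2) \<le> n"
    using n Suc by (simp add: L_def algebra_simps)
  have left: "1 \<le> sum h {0..<k + 2}"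
    by (rule path_resolving_one_le_sum_edge_window[OF h, of 0]) (use n' in simp_all)
  have middle: "real m \<le> sum h {k + 2..<k + 2 + L}"
    unfolding L_def by (rule path_resolving_blocks_le_sum[OF h]) (use n' in \<open>simp add: L_def\<close>)
  have gap: "0 \<le> sum h {k + 2 + L..<n - (k + 2)}"
    by (rule sum_nonneg) (use path_resolving_nonneg[OF h] in auto)
  have right: "1 \<le> sum h {n - (k + 2)..<n}"
    by (rule path_resolving_one_le_sum_edge_window[OF h, of "n - 2"]) (use n' in simp_all)
  have "sum h {0..<n} = sum h {0..<k + 2} + sum h {k + 2..<n}"
    "sum h {k + 2..<n} = sum h {k + 2..<k + 2 + L} + sum h {k + 2 + L..<n}"
    "sum h {k + 2 + L..<n} = sum h {k + 2 + L..<n - (k + 2)} + sum h {n - (k + 2)..<n}"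
    by (rule sum.atLeastLessThan_concat[symmetric]; use n' in simp)+
  then show ?thesis
    using left middle gap right Suc by simp
qed

lemma path_resolving_weight_ge_rem_1:
  assumes h: "path_resolving k n h" and "1 \<le> q" and n: "n = q * (2 * k + 2) + 1"
  shows "real q + 1 / 2 \<le> sum h {0..<n}"
proof -
  obtain m where q: "q = Suc m"
    using \<open>1 \<le> q\<close> by (cases q) auto
  define L where "L = m * (2 * k + 2)"
  define c where "c = L + k + 1"
  have n': "n = L + 2 * k + 3" "c = n - (k + 2)"
    using n by (simp_all add: q L_def c_def)
  have left: "1 \<le> sum h {0..<k + 2}"
    by (rule path_resolving_one_le_sum_edge_window[OF h, of 0]) (use n' in simp_all)
  have middle: "real m \<le> sum h {k + 2..<k + 2 + L}"
    unfolding L_def by (rule path_resolving_blocks_le_sum[OF h]) (use n' in \<open>simp add: L_def\<close>)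
  have right: "1 \<le> sum h {c..<n}"
    by (rule path_resolving_one_le_sum_edge_window[OF h, of "n - 2"]) (use n' in simp_all)
  have blocks: "real m \<le> sum h {0..<L}"
    using path_resolving_blocks_le_sum[OF h, of 0 m] n' by (simp add: L_def)
  have hole: "1 \<le> sum h {L..<n} - h c"
    by (rule path_resolving_one_le_sum_minus_midpoint[OF h]) (use n' in \<open>simp_all add: c_def\<close>)
  have "sum h {0..<n} = sum h {0..<k + 2} + sum h {k + 2..<n}"
    "sum h {k + 2..<n} = sum h {k + 2..<k + 2 + L} + sum h {k + 2 + L..<n}"
    "sum h {0..<n} = sum h {0..<L} + sum h {L..<n}"
    by (rule sum.atLeastLessThan_concat[symmetric]; use n' in \<open>simp add: c_def\<close>)+
  moreover have "sum h {c..<n} = h c + sum h {k + 2 + L..<n}"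
    using n' sum.atLeast_Suc_lessThan[of c n h] by (simp add: c_def ac_simps)
  ultimately show ?thesis
    using left middle right blocks hole q by simp
qed

lemma path_resolving_weight_ge_medium:
  assumes h: "path_resolving k n h" and n: "k + 3 \<le> n" "n \<le> 2 * k + 3"
  shows "(6 + 2 * real k - real n) / (5 + 2 * real k - real n) \<le> sum h {0..<n}"
proof -
  define a where "a = n - (k + 2)"
  define M where "M = {a..<k + 2}"
  define H where "H = sum h {0..<n}"
  have a: "1 \<le> a" "a \<le> k + 2" "n = a + k + 2"
    using n by (simp_all add: a_def)
  have card_M: "real (card M) = 2 * real k + 4 - real n"
    using a by (simp add: M_def of_nat_diff)
  have "sum h {0..<k + 2} = sum h {0..<a} + sum h M"
    "sum h {a..<n} = sum h M + sum h {k + 2..<n}"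
    "H = sum h {0..<a} + sum h {a..<n}"
    unfolding M_def H_def by (rule sum.atLeastLessThan_concat[symmetric]; use a in simp)+
  moreover have "1 \<le> sum h {0..<k + 2}"
    by (rule path_resolving_one_le_sum_edge_window[OF h, of 0]) (use n in simp_all)
  moreover have "1 \<le> sum h {a..<n}"
    by (rule path_resolving_one_le_sum_edge_window[OF h, of "n - 2"]) (use n in \<open>simp_all add: a_def\<close>)
  ultimately have ends: "2 \<le> H + sum h M"
    by linarith
  \<comment> \<open>Summing the midpoint bounds over the central vertices \<open>M\<close> and adding the two end windows,
    which overlap exactly in \<open>M\<close>, eliminates \<open>h(M)\<close>.\<close>
  have "1 \<le> H - h c" if "c \<in> M" for c
    unfolding H_def
    by (rule path_resolving_one_le_sum_minus_midpoint[OF h]) (use that a in \<open>auto simp: M_def\<close>)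
  then have "(\<Sum>c\<in>M. 1) \<le> (\<Sum>c\<in>M. H - h c)"
    by (rule sum_mono)
  then have "real (card M) \<le> real (card M) * H - sum h M"
    by (simp add: sum_subtractf)
  with ends have "real (card M) + 2 \<le> (real (card M) + 1) * H"
    by (simp add: algebra_simps)
  moreover have "0 < 5 + 2 * real k - real n"
    using n by simp
  ultimately show ?thesis
    unfolding H_def[symmetric] using card_M by (simp add: divide_le_eq algebra_simps)
qed

lemma dimP_le_half_card:
  assumes P: "P \<subseteq> {0..<n}" "0 \<in> P" "n - 1 \<in> P"
    and covers: "\<And>a. a + k < n \<Longrightarrow> \<exists>p\<in>P. a \<le> p \<and> p \<le> a + k"
  shows "dimP k n \<le> card P / 2"
proof -
  have "finite P"
    using P(1) finite_subset by blast
  have resolved: "1 \<le> 1 / 2 * card (path_resolv_set k n x y \<inter> P)" if xy: "x < y" "y < n" for x y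
  proof -
    obtain p where p: "p \<in> P" "p \<le> x" "x \<le> p + k"
    proof (cases "k \<le> x")
      case True
      then show ?thesis
        using covers[of "x - k"] xy that by fastforce
    qed (use P(2) that in auto)
    obtain p' where p': "p' \<in> P" "y \<le> p'" "p' \<le> y + k"
    proof (cases "y + k < n")
      case True
      then show ?thesis
        using covers[of y] that by blast
    qed (use P(3) xy that in auto)
    have "{p, p'} \<subseteq> path_resolv_set k n x y \<inter> P"
      using p p' xy P(1) by (auto simp: mem_path_resolv_set)
    then have "card {p, p'} \<le> card (path_resolv_set k n x y \<inter> P)"
      using \<open>finite P\<close> by (intro card_mono) auto
    moreover have "p \<noteq> p'"
      using p p' xy by auto
    ultimately show ?thesis
      by simp
  qed
  have "dimP k n \<le> 1 / 2 * card P"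
  proof (rule frac_trunc_dim_le_uniform)
    fix x y assume "x \<in> path_V n" "y \<in> path_V n" "x \<noteq> y"
    then show "1 \<le> 1 / 2 * card (path_resolv_set k n x y \<inter> P)"
      using resolved[of x y] resolved[of y x] resolv_set_commute[of k "path_V n" "path_E n" x y]
      by (auto simp: path_V_def neq_iff)
  qed (use P(1) in \<open>simp_all add: path_V_def\<close>)
  then show ?thesis
    by simp
qed

lemma dimP_le_multiples:
  assumes "1 \<le> n"
  shows "dimP k n \<le> (real ((n - 1 + k) div (k + 1)) + 1) / 2"
proof -
  define t where "t = (n - 1 + k) div (k + 1)"
  define P where "P = (\<lambda>i. min (i * (k + 1)) (n - 1)) ` {..t}"
  have div_bounds: "m \<le> m' div (k + 1) * (k + 1)" "m' div (k + 1) * (k + 1) \<le> m'"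
    if "m' = m + k" for m m' :: nat
    using that div_mult_mod_eq[of m' "k + 1"] mod_less_divisor[of "k + 1" m'] by linarith+
  have "dimP k n \<le> card P / 2"
  proof (rule dimP_le_half_card)
    show "P \<subseteq> {0..<n}"
      using assms by (auto simp: P_def)
    show "0 \<in> P"
      unfolding P_def by (intro image_eqI[of _ _ 0]) simp_all
    have "n - 1 \<le> t * (k + 1)"
      using div_bounds(1)[of "n - 1 + k" "n - 1"] by (simp add: t_def)
    then show "n - 1 \<in> P"
      unfolding P_def by (intro image_eqI[of _ _ t]) simp_all
    fix a assume "a + k < n"
    define i where "i = (a + k) div (k + 1)"
    have i: "a \<le> i * (k + 1)" "i * (k + 1) \<le> a + k"
      using div_bounds[of "a + k" a] by (simp_all add: i_def)
    have "i \<le> t"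
      unfolding i_def t_def using \<open>a + k < n\<close> by (intro div_le_mono) simp
    then have "i * (k + 1) \<in> P"
      unfolding P_def using i \<open>a + k < n\<close> by (intro image_eqI[of _ _ i]) simp_all
    then show "\<exists>p\<in>P. a \<le> p \<and> p \<le> a + k"
      using i by blast
  qed
  also have "card P \<le> t + 1"
    unfolding P_def using card_image_le[of "{..t}"] by simp
  finally show ?thesis
    by (simp add: t_def divide_right_mono)
qed

text \<open>A vertex \<open>p\<close> with \<open>n-k-2 \<le> p \<le> k+1\<close> is within distance \<open>k+1\<close> of every vertex, so the
  truncation never separates \<open>x\<close> and \<open>y\<close> there and only the midpoint fails to resolve them.\<close>

lemma path_landmark_not_resolving:
  assumes xy: "x < y" "y < n" and "p < n" "p \<notin> path_resolv_set k n x y"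
  shows "p = 0 \<Longrightarrow> k < x"
    and "p = n - 1 \<Longrightarrow> y + k + 1 < n"
    and "n - (k + 2) \<le> p \<Longrightarrow> p < k + 2 \<Longrightarrow> x + y = 2 * p"
proof -
  have "min (nat_dist x p) (k + 1) = min (nat_dist y p) (k + 1)"
    using assms mem_path_resolv_set[OF less_trans[OF xy] xy(2)] by blast
  then have "x + y = 2 * p \<or> (k < nat_dist x p \<and> k < nat_dist y p)"
    using xy(1) by linarith
  then show "p = 0 \<Longrightarrow> k < x" "p = n - 1 \<Longrightarrow> y + k + 1 < n"
    "n - (k + 2) \<le> p \<Longrightarrow> p < k + 2 \<Longrightarrow> x + y = 2 * p"
    using xy by linarith+
qed

lemma path_medium_landmarks_unresolved_unique:
  fixes k n :: nat
  defines "P \<equiv> insert 0 (insert (n - 1) {n - (k + 2)..<k + 2})"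
  assumes n: "k + 3 \<le> n" "n \<le> 2 * k + 3" and xy: "x < y" "y < n"
    and "p \<in> P - path_resolv_set k n x y" "p' \<in> P - path_resolv_set k n x y"
  shows "p = p'"
proof -
  have "(q = 0 \<and> k < x) \<or> (q = n - 1 \<and> y + k + 1 < n) \<or> (x + y = 2 * q \<and> n - (k + 2) \<le> q \<and> q < k + 2)"
    if q: "q \<in> P - path_resolv_set k n x y" for q
  proof -
    have "q < n" "q \<notin> path_resolv_set k n x y"
      using q n by (auto simp: P_def)
    note landmark = path_landmark_not_resolving[OF xy this]
    consider "q = 0" | "q = n - 1" | "n - (k + 2) \<le> q" "q < k + 2"
      using q by (auto simp: P_def)
    then show ?thesis
      using landmark by cases auto
  qed
  from this[OF assms(6)] this[OF assms(7)] show "p = p'"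
    using n xy by linarith
qed

lemma dimP_le_medium:
  assumes n: "k + 3 \<le> n" "n \<le> 2 * k + 3"
  shows "dimP k n \<le> (6 + 2 * real k - real n) / (5 + 2 * real k - real n)"
proof -
  define P where "P = insert 0 (insert (n - 1) {n - (k + 2)..<k + 2})"
  define w where "w = 1 / (5 + 2 * real k - real n)"
  have "finite P" "P \<subseteq> {0..<n}"
    using n by (auto simp: P_def)
  have card_P: "real (card P) = 6 + 2 * real k - real n"
    using n by (simp add: P_def card_insert_if of_nat_diff) linarith
  have resolved: "1 \<le> w * card (path_resolv_set k n x y \<inter> P)" if "x < y" "y < n" for x y
  proof -
    have "\<forall>p\<in>P - path_resolv_set k n x y. \<forall>p'\<in>P - path_resolv_set k n x y. p = p'"
      using path_medium_landmarks_unresolved_unique[OF n that, folded P_def] by blast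
    then have "card (P - path_resolv_set k n x y) \<le> 1"
      using \<open>finite P\<close> by (simp add: card_le_Suc0_iff_eq)
    then have "real (card P) - 1 \<le> card (path_resolv_set k n x y \<inter> P)"
      using card_Int_Diff[OF \<open>finite P\<close>, of "path_resolv_set k n x y"] by (simp add: Int_commute)
    then show ?thesis
      using n card_P by (simp add: w_def field_simps)
  qed
  have "dimP k n \<le> w * card P"
  proof (rule frac_trunc_dim_le_uniform)
    fix x y assume "x \<in> path_V n" "y \<in> path_V n" "x \<noteq> y"
    then show "1 \<le> w * card (path_resolv_set k n x y \<inter> P)"
      using resolved[of x y] resolved[of y x] resolv_set_commute[of k "path_V n" "path_E n" x y]
      by (auto simp: path_V_def neq_iff)
  qed (use n \<open>P \<subseteq> {0..<n}\<close> in \<open>simp_all add: path_V_def w_def\<close>)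
  then show ?thesis
    by (simp add: card_P w_def)
qed

lemma nat_residue_pos_decomposition:
  fixes n d :: nat
  assumes "1 \<le> n" "0 < d"
  obtains q r where "n = q * d + r" "1 \<le> r" "r \<le> d"
    "\<lceil>real n / real d\<rceil> = int q + 1" "n mod d = (if r = d then 0 else r)"
proof -
  define q where "q = (n - 1) div d"
  define r where "r = (n - 1) mod d + 1"
  have n: "n = q * d + r" and r: "1 \<le> r" "r \<le> d"
    using assms div_mult_mod_eq[of "n - 1" d] by (simp_all add: q_def r_def Suc_le_eq)
  have "\<lceil>real n / real d\<rceil> = int q + 1"
  proof (rule ceiling_unique)
    show "real_of_int (int q + 1) - 1 < real n / real d" "real n / real d \<le> real_of_int (int q + 1)"
      using assms r unfolding n by (simp_all add: field_simps)
  qed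
  moreover have "n mod d = (if r = d then 0 else r)"
    using r unfolding n by simp
  ultimately show ?thesis
    using that n r by blast
qed

lemma dimP_le_rem:
  assumes "1 \<le> j"
  shows "dimP k (q * (2 * k + 2) + j) \<le> real q + (real ((j - 1 + k) div (k + 1)) + 1) / 2"
proof -
  have "q * (2 * k + 2) + j - 1 + k = 2 * q * (k + 1) + (j - 1 + k)"
    using assms by (simp add: algebra_simps)
  then have "(q * (2 * k + 2) + j - 1 + k) div (k + 1) = 2 * q + (j - 1 + k) div (k + 1)"
    by (simp only:) (rule div_mult_self3, simp)
  then show ?thesis
    using dimP_le_multiples[of "q * (2 * k + 2) + j" k] assms by (simp add: field_simps)
qed

lemma dimP_eq_rem_1:
  assumes "1 \<le> q"
  shows "dimP k (q * (2 * k + 2) + 1) = real q + 1 / 2"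
proof (rule antisym)
  show "dimP k (q * (2 * k + 2) + 1) \<le> real q + 1 / 2"
    using dimP_le_rem[of 1 k q] by simp
  show "real q + 1 / 2 \<le> dimP k (q * (2 * k + 2) + 1)"
    by (rule dimP_ge) (use path_resolving_weight_ge_rem_1 assms in blast)
qed

lemma dimP_eq_rem_low:
  assumes "2 \<le> j" "j \<le> k + 2"
  shows "dimP k (q * (2 * k + 2) + j) = real q + 1"
proof (rule antisym)
  have "(j - 1 + k) div (k + 1) = 1"
    using assms by (intro div_nat_eqI) simp_all
  then show "dimP k (q * (2 * k + 2) + j) \<le> real q + 1"
    using dimP_le_rem[of j k q] assms by simp
  show "real q + 1 \<le> dimP k (q * (2 * k + 2) + j)"
    by (rule dimP_ge) (use path_resolving_weight_ge_rem_ge_2 assms in simp)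
qed

lemma dimP_bounds_rem_high:
  assumes "k + 3 \<le> j" "j \<le> 2 * k + 2"
  shows "real q + 1 \<le> dimP k (q * (2 * k + 2) + j)"
    and "dimP k (q * (2 * k + 2) + j) \<le> real q + 3 / 2"
proof -
  show "real q + 1 \<le> dimP k (q * (2 * k + 2) + j)"
    by (rule dimP_ge) (use path_resolving_weight_ge_rem_ge_2 assms in simp)
  have "(j - 1 + k) div (k + 1) < 3"
    using assms by (intro less_mult_imp_div_less) simp
  then have "(real ((j - 1 + k) div (k + 1)) + 1) / 2 \<le> 3 / 2"
    by simp
  moreover have "dimP k (q * (2 * k + 2) + j) \<le> real q + (real ((j - 1 + k) div (k + 1)) + 1) / 2"
    using assms by (intro dimP_le_rem) simp
  ultimately show "dimP k (q * (2 * k + 2) + j) \<le> real q + 3 / 2"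
    by linarith
qed

lemma dimP_eq_medium:
  assumes "k + 3 \<le> n" "n \<le> 2 * k + 3"
  shows "dimP k n = (6 + 2 * real k - real n) / (5 + 2 * real k - real n)"
  using dimP_le_medium[OF assms] dimP_ge[OF path_resolving_weight_ge_medium[OF _ assms]]
  by (rule antisym)

theorem theorem3p11:
  fixes k n :: nat
  assumes "k \<ge> 1" and "n \<ge> 2"
  shows "(n \<le> k + 2 \<longrightarrow> dimP k n = 1)
    \<and> (k + 3 \<le> n \<and> n \<le> 2 * k + 3 \<longrightarrow>
         dimP k n = (6 + 2 * real k - real n) / (5 + 2 * real k - real n))
    \<and> (n \<ge> 2 * k + 4 \<longrightarrow>
         (n mod (2 * k + 2) = 1 \<longrightarrow> dimP k n = (real n + real k) / (2 * real k + 2))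
       \<and> ((\<exists>j\<in>{2..k + 2}. n mod (2 * k + 2) = j) \<longrightarrow>
            dimP k n = of_int \<lceil>real n / (2 * real k + 2)\<rceil>)
       \<and> (n mod (2 * k + 2) = 0 \<or> (\<exists>j\<in>{k + 3..2 * k + 1}. n mod (2 * k + 2) = j) \<longrightarrow>
            of_int \<lceil>real n / (2 * real k + 2)\<rceil> \<le> dimP k n \<and>
            dimP k n \<le> of_int \<lceil>real n / (2 * real k + 2)\<rceil> + 1 / 2))"
proof -
  \<comment> \<open>Taking the residue in \<open>{1..2k+2}\<close> puts \<open>n \<equiv> 0\<close> next to the residues \<open>k+3, ..., 2k+1\<close>.\<close>
  obtain q r where n: "n = q * (2 * k + 2) + r" and r: "1 \<le> r" "r \<le> 2 * k + 2"
    and "\<lceil>real n / real (2 * k + 2)\<rceil> = int q + 1"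
    and rem: "n mod (2 * k + 2) = (if r = 2 * k + 2 then 0 else r)"
    using nat_residue_pos_decomposition[of n "2 * k + 2"] \<open>n \<ge> 2\<close> by auto
  then have ceiling: "of_int \<lceil>real n / (2 * real k + 2)\<rceil> = real q + 1"
    by (simp add: add.commute)
  show ?thesis
  proof (intro conjI impI)
    assume "n \<le> k + 2"
    then show "dimP k n = 1"
      using dimP_eq_rem_low[of n k 0] \<open>n \<ge> 2\<close> by simp
  next
    assume "k + 3 \<le> n \<and> n \<le> 2 * k + 3"
    then show "dimP k n = (6 + 2 * real k - real n) / (5 + 2 * real k - real n)"
      using dimP_eq_medium by blast
  next
    assume "2 * k + 4 \<le> n" "n mod (2 * k + 2) = 1"
    moreover from this have "r = 1"
      using rem r by (auto split: if_splits)
    ultimately have "1 \<le> q"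
      using n by (cases q) simp_all
    then show "dimP k n = (real n + real k) / (2 * real k + 2)"
      using dimP_eq_rem_1[of q k] n \<open>r = 1\<close> by (simp add: field_simps)
  next
    assume "\<exists>j\<in>{2..k + 2}. n mod (2 * k + 2) = j"
    then have "2 \<le> r" "r \<le> k + 2"
      using rem r by (auto split: if_splits)
    then show "dimP k n = of_int \<lceil>real n / (2 * real k + 2)\<rceil>"
      using dimP_eq_rem_low[of r k q] n ceiling by simp
  next
    assume "n mod (2 * k + 2) = 0 \<or> (\<exists>j\<in>{k + 3..2 * k + 1}. n mod (2 * k + 2) = j)"
    then have "k + 3 \<le> r"
      using rem r \<open>k \<ge> 1\<close> by (auto split: if_splits)
    then show "of_int \<lceil>real n / (2 * real k + 2)\<rceil> \<le> dimP k n"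
      "dimP k n \<le> of_int \<lceil>real n / (2 * real k + 2)\<rceil> + 1 / 2"
      using dimP_bounds_rem_high[OF _ r(2), of q] n ceiling by simp_all
  qed
qed

end
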